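(* Let $T:\mathbb{N}_+\to\mathbb{N}_+$ with $T\in\Omega(n)$ be the halting function of some Turing machine (i.e. some Turing machine is a $T$-halter). Then there is an unbounded multiway system whose growth function has a pair of tight bounds $(a,b)$ with $a,b\in\mathcal{O}(T_*^{-1})$, where $T_*=L_{\mathbb{N}_+}\big(n\mapsto\sum_{k=1}^n T(k)\big)$.
   Context: A (string-based) multiway system is a triple $M=(R,s_{\text{init}},\Sigma)$ with $\Sigma$ a finite alphabet, $R$ a finite set of string replacement rules $r\to t$ ($r,t\in\Sigma^*$) and initial string $s_{\text{init}}\in\Sigma^*$. Its states graph has as vertices the strings reachable from $s_{\text{init}}$, with an edge $u\to v$ whenever $v$ arises from $u$ by replacing one occurrence of some rule's left side by its right side. The growth function $g_M(n)$ is the number of states at shortest-path distance $n-1$ from $s_{\text{init}}$. $M$ is finite if $g_M(n)=0$ for some $n$, bounded if not finite and $g_M$ bounded, unbounded otherwise. For an unbounded system with growth function $a$: $\overline{a}_n=\max\{a_k:k\le n\}$, $\underline{a}_n=\max(\{a_k:k\le n,\ \forall l\ge k: a_l\ge a_k\}\cup\{1\})$. For $h:\mathbb{N}_+\to\mathbb{N}_+$ and infinite $S\subseteq\mathbb{N}_+$, $L_S(h)$ is the polygonal chain from $(0,0)$ through the points $(n,h(n))$, $n\in S$, regarded as a continuous function $\mathbb{R}_{\ge0}\to\mathbb{R}_{\ge0}$. Continuous $f,g:\mathbb{R}_{\ge0}\to\mathbb{R}_{\ge0}$ are tight bounds of $a$ if $f\in\Theta(L_{\mathbb{N}_+}(\overline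 a))$ and $g\in\Theta(L_{\mathbb{N}_+}(\underline a))$. For $T:\mathbb{N}_+\to\mathbb{N}_+$, a $T$-halter is a deterministic Turing machine (blank symbol $0$, with symbol $1$ in its alphabet) which, when started in its start state on an otherwise blank tape containing $n$ in unary (a block of $n$ ones) with the head on the first one, executes exactly $T(n)$ operations and then halts, at which point the tape contains $n+1$ in unary, preceded and followed by at least one blank, with the head on or to the left of the first digit; $T$ is then called its halting function. $T_*^{-1}$ denotes the inverse of the (strictly increasing, unbounded) function $T_*$. *)

theory Defs
  imports Complex_Main "HOL-Library.Landau_Symbols" "HOL-Library.Infinite_Set"
begin

text \<open>A multiway system (R, s_init, Sigma); the alphabet is encoded as a finite
  set of natural numbers (any finite alphabet can be so encoded).\<close>

definition mw_valid :: "(nat list \<times> nat list) set \<Rightarrow> nat list \<Rightarrow> nat set \<Rightarrow> bool" where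
  "mw_valid R s \<Sigma> \<longleftrightarrow> finite \<Sigma> \<and> finite R \<and> s \<in> lists \<Sigma> \<and>
     (\<forall>(r, t) \<in> R. r \<in> lists \<Sigma> \<and> t \<in> lists \<Sigma>)"

definition mw_step :: "(nat list \<times> nat list) set \<Rightarrow> (nat list \<times> nat list) set" where
  "mw_step R = {(u, v). \<exists>x y r t. (r, t) \<in> R \<and> u = x @ r @ y \<and> v = x @ t @ y}"

definition mw_layer :: "(nat list \<times> nat list) set \<Rightarrow> nat list \<Rightarrow> nat \<Rightarrow> nat list set" where
  "mw_layer R s k = {v. (s, v) \<in> mw_step R ^^ k \<and> (\<forall>j<k. (s, v) \<notin> mw_step R ^^ j)}"

text \<open>Growth function g(n) = number of states at distance n-1 (meaningful for n \<ge> 1).\<close>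
definition mw_growth :: "(nat list \<times> nat list) set \<Rightarrow> nat list \<Rightarrow> nat \<Rightarrow> nat" where
  "mw_growth R s n = card (mw_layer R s (n - 1))"

definition mw_finite :: "(nat list \<times> nat list) set \<Rightarrow> nat list \<Rightarrow> bool" where
  "mw_finite R s \<longleftrightarrow> (\<exists>n\<ge>1. mw_growth R s n = 0)"

definition mw_bounded :: "(nat list \<times> nat list) set \<Rightarrow> nat list \<Rightarrow> bool" where
  "mw_bounded R s \<longleftrightarrow> \<not> mw_finite R s \<and> (\<exists>B. \<forall>n\<ge>1. mw_growth R s n \<le> B)"

definition mw_unbounded :: "(nat list \<times> nat list) set \<Rightarrow> nat list \<Rightarrow> bool" where
  "mw_unbounded R s \<longleftrightarrow> \<not> mw_finite R s \<and> \<not> mw_bounded R s"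

definition upper_env :: "(nat \<Rightarrow> nat) \<Rightarrow> nat \<Rightarrow> nat" where
  "upper_env a n = Max {a k | k. 1 \<le> k \<and> k \<le> n}"

definition lower_env :: "(nat \<Rightarrow> nat) \<Rightarrow> nat \<Rightarrow> nat" where
  "lower_env a n = Max ({a k | k. 1 \<le> k \<and> k \<le> n \<and> (\<forall>l\<ge>k. a l \<ge> a k)} \<union> {1})"

text \<open>Polygonal chain from (0,0) through the points (n, h n), n \<in> S (S infinite
  subset of the positive integers), in increasing order of n.\<close>
definition Lchain :: "nat set \<Rightarrow> (nat \<Rightarrow> nat) \<Rightarrow> real \<Rightarrow> real" where
  "Lchain S h x =
     (let q = (\<lambda>i. if i = 0 then 0 else real (enumerate S (i - 1)));
          v = (\<lambda>i. if i = 0 then 0 else real (h (enumerate S (i - 1))));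
          i = (LEAST i. x < q (Suc i))
      in v i + (v (Suc i) - v i) * (x - q i) / (q (Suc i) - q i))"

definition pos_nat :: "nat set" where
  "pos_nat = {n. 1 \<le> n}"

definition tight_bounds :: "(nat \<Rightarrow> nat) \<Rightarrow> (real \<Rightarrow> real) \<Rightarrow> (real \<Rightarrow> real) \<Rightarrow> bool" where
  "tight_bounds a f g \<longleftrightarrow>
     continuous_on {0..} f \<and> continuous_on {0..} g \<and>
     (\<forall>x\<ge>0. f x \<ge> 0) \<and> (\<forall>x\<ge>0. g x \<ge> 0) \<and>
     f \<in> \<Theta>(Lchain pos_nat (upper_env a)) \<and>
     g \<in> \<Theta>(Lchain pos_nat (lower_env a))"

text \<open>A deterministic single-tape Turing machine: finite state set Q, finite tape
  alphabet Gamma containing blank 0 and 1, start state q0, and a partial transition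
  function delta q a = Some (q', b, right) (right = True moves right, False left);
  the machine halts when delta is undefined.\<close>

type_synonym tm_delta = "nat \<Rightarrow> nat \<Rightarrow> (nat \<times> nat \<times> bool) option"
type_synonym tm_config = "nat \<times> (int \<Rightarrow> nat) \<times> int"

definition tm_valid :: "nat set \<Rightarrow> nat set \<Rightarrow> tm_delta \<Rightarrow> nat \<Rightarrow> bool" where
  "tm_valid Q \<Gamma> \<delta> q0 \<longleftrightarrow> finite Q \<and> finite \<Gamma> \<and> 0 \<in> \<Gamma> \<and> 1 \<in> \<Gamma> \<and> q0 \<in> Q \<and>
     (\<forall>q a q' b d. \<delta> q a = Some (q', b, d) \<longrightarrow> q \<in> Q \<and> a \<in> \<Gamma> \<and> q' \<in> Q \<and> b \<in> \<Gamma>)"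

definition tm_step :: "tm_delta \<Rightarrow> tm_config \<Rightarrow> tm_config option" where
  "tm_step \<delta> c = (case c of (q, tp, h) \<Rightarrow>
     (case \<delta> q (tp h) of
        None \<Rightarrow> None
      | Some (q', b, d) \<Rightarrow> Some (q', tp(h := b), if d then h + 1 else h - 1)))"

fun tm_run :: "tm_delta \<Rightarrow> tm_config \<Rightarrow> nat \<Rightarrow> tm_config option" where
  "tm_run \<delta> c 0 = Some c"
| "tm_run \<delta> c (Suc k) = Option.bind (tm_run \<delta> c k) (tm_step \<delta>)"

definition unary_tape :: "int \<Rightarrow> nat \<Rightarrow> int \<Rightarrow> nat" where
  "unary_tape p n = (\<lambda>i. if p \<le> i \<and> i < p + int n then 1 else 0)"

text \<open>T-halter: on input n \<ge> 1 in unary (head on first one) it makes exactly T n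
  steps and halts with n+1 in unary on an otherwise blank tape, head on or left of
  the first digit.\<close>
definition is_halter :: "(nat \<Rightarrow> nat) \<Rightarrow> nat set \<Rightarrow> nat set \<Rightarrow> tm_delta \<Rightarrow> nat \<Rightarrow> bool" where
  "is_halter T Q \<Gamma> \<delta> q0 \<longleftrightarrow> tm_valid Q \<Gamma> \<delta> q0 \<and>
     (\<forall>n\<ge>1. \<exists>q tp h p. tm_run \<delta> (q0, unary_tape 0 n, 0) (T n) = Some (q, tp, h) \<and>
        tm_step \<delta> (q, tp, h) = None \<and> tp = unary_tape p (Suc n) \<and> h \<le> p)"

definition Tstar :: "(nat \<Rightarrow> nat) \<Rightarrow> real \<Rightarrow> real" where
  "Tstar T = Lchain pos_nat (\<lambda>n. \<Sum>k=1..n. T k)"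

definition Tstar_inv :: "(nat \<Rightarrow> nat) \<Rightarrow> real \<Rightarrow> real" where
  "Tstar_inv T y = (THE x. 0 \<le> x \<and> Tstar T x = y)"

end

theory Submission
  imports Defs
begin

(*
  The multiway system simulates the T-halter on the inputs 1, 2, 3, ... one after another.  A word
  encodes a configuration of the machine, with the state written immediately left of the head cell,
  and contains exactly one odd (control) symbol; hence rewriting is deterministic except when the
  machine halts on input n.  Then the word either rewinds to the first digit of the output n + 1
  and restarts the machine there, or forks off a word that from then on only appends one tally
  symbol per step.  So the states at depth k are one word of the main line plus at most one fork
  word per completed run, and after c completed runs T(1) + ... + T(c) \<le> k.  Every layer therefore
  has at most 1 + T_*^-1(k) elements, a bound inherited by both envelopes of the growth function
  and by their polygonal chains.  Conversely, the fork of the n-th run eventually meets every layer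
  and forks of different runs differ in their number of ones, so the system is unbounded.
*)

section \<open>Layers of multiway systems\<close>

lemma mw_valid_rule_symbols:
  assumes "finite R"
  shows "mw_valid R s (set s \<union> \<Union> ((\<lambda>(r, t). set r \<union> set t) ` R))"
  unfolding mw_valid_def using assms by (auto simp: in_listsI)

definition mw_dist :: "(nat list \<times> nat list) set \<Rightarrow> nat list \<Rightarrow> nat list \<Rightarrow> nat" where
  "mw_dist R s w = (LEAST k. (s, w) \<in> mw_step R ^^ k)"

lemma mw_dist_le: "(s, w) \<in> mw_step R ^^ k \<Longrightarrow> mw_dist R s w \<le> k"
  unfolding mw_dist_def by (rule Least_le)

lemma in_mw_layer_mw_dist:
  assumes "(s, w) \<in> (mw_step R)\<^sup>*"
  shows "w \<in> mw_layer R s (mw_dist R s w)"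
proof -
  obtain k where "(s, w) \<in> mw_step R ^^ k" using assms rtrancl_power by blast
  then have "(s, w) \<in> mw_step R ^^ mw_dist R s w" unfolding mw_dist_def by (rule LeastI)
  moreover have "(s, w) \<notin> mw_step R ^^ j" if "j < mw_dist R s w" for j
    using mw_dist_le[where k = j] that by (meson leD)
  ultimately show ?thesis unfolding mw_layer_def by blast
qed

lemma mw_layer_nonempty_le:
  assumes "mw_layer R s d \<noteq> {}" "j \<le> d"
  shows "mw_layer R s j \<noteq> {}"
proof -
  obtain w where w: "(s, w) \<in> mw_step R ^^ (j + (d - j))" "\<forall>i<d. (s, w) \<notin> mw_step R ^^ i"
    using assms unfolding mw_layer_def by auto
  then obtain u where u: "(s, u) \<in> mw_step R ^^ j" "(u, w) \<in> mw_step R ^^ (d - j)"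
    unfolding relpow_add by blast
  have "(s, u) \<notin> mw_step R ^^ i" if "i < j" for i
  proof
    assume "(s, u) \<in> mw_step R ^^ i"
    then have "(s, w) \<in> mw_step R ^^ (i + (d - j))" using u(2) unfolding relpow_add by blast
    then show False using w(2) that assms(2) by simp
  qed
  then show ?thesis using u(1) unfolding mw_layer_def by blast
qed

lemma mw_unboundedI:
  assumes "\<And>k. finite (mw_layer R s k)" "\<And>k. mw_layer R s k \<noteq> {}"
    and "\<And>N. \<exists>k. N \<le> card (mw_layer R s k)"
  shows "mw_unbounded R s"
proof -
  have "\<not> mw_finite R s"
    using assms(1,2) by (auto simp: mw_finite_def mw_growth_def)
  moreover have "\<not> mw_bounded R s"
  proof
    assume "mw_bounded R s"
    then obtain B where B: "\<forall>n\<ge>1. mw_growth R s n \<le> B" unfolding mw_bounded_def by blast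
    obtain k where "Suc B \<le> card (mw_layer R s k)" using assms(3) by blast
    moreover have "card (mw_layer R s k) \<le> B" using B[rule_format, of "Suc k"] by (simp add: mw_growth_def)
    ultimately show False by linarith
  qed
  ultimately show ?thesis unfolding mw_unbounded_def by blast
qed

lemma count_list_relpow_mw_step_le:
  assumes "\<And>r t. (r, t) \<in> R \<Longrightarrow> count_list t x \<le> 1"
    and "(s, w) \<in> mw_step R ^^ k"
  shows "count_list w x \<le> count_list s x + k"
  using assms(2)
proof (induction k arbitrary: w)
  case (Suc k)
  then obtain u r t l y where "(s, u) \<in> mw_step R ^^ k" "(r, t) \<in> R" "u = l @ r @ y" "w = l @ t @ y"
    unfolding mw_step_def by (auto elim: relpow_Suc_E)
  then have "count_list w x \<le> count_list u x + 1" using assms(1)[of r t] by simp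
  then show ?case using Suc.IH[OF \<open>(s, u) \<in> _\<close>] by simp
qed simp

lemma Image_singleton_eqD: "r `` {a} = B \<Longrightarrow> b \<in> B \<Longrightarrow> (a, b) \<in> r"
  by blast

lemma card_Image_le_if_functional:
  assumes "finite B" "\<And>w. w \<in> B \<Longrightarrow> \<exists>w'. r `` {w} = {w'}"
  shows "finite (r `` B) \<and> card (r `` B) \<le> card B"
proof -
  obtain f where f: "\<And>w. w \<in> B \<Longrightarrow> r `` {w} = {f w}" using assms(2) by metis
  have "r `` B = (\<Union>w\<in>B. r `` {w})" by blast
  also have "\<dots> = f ` B" using f by (simp add: UNION_singleton_eq_range)
  finally show ?thesis using assms(1) by (simp add: card_image_le)
qed

lemma antimono_nat_eventually_const:
  fixes f :: "nat \<Rightarrow> nat"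
  assumes "\<And>m. f (Suc m) \<le> f m"
  obtains M where "\<And>m. M \<le> m \<Longrightarrow> f m = f M"
proof -
  obtain M where M: "\<forall>m. f M \<le> f m"
    using ex_has_least_nat[of "\<lambda>_. True" f] by blast
  show thesis
  proof (rule that)
    fix m assume "M \<le> m"
    then show "f m = f M" using lift_Suc_antimono_le[of f, OF assms] M by (meson order_antisym)
  qed
qed

section \<open>Polygonal chains and the inverse of \<open>T\<^sub>*\<close>\<close>

lemma enumerate_pos_nat: "enumerate pos_nat i = Suc i"
proof (induction i)
  case 0
  then show ?case by (simp add: enumerate_0 pos_nat_def Least_equality)
next
  case (Suc i)
  have "infinite pos_nat"
    unfolding pos_nat_def by (metis atLeast_def infinite_Ici Collect_mono_iff)
  then show ?case
    using Suc by (auto simp: enumerate_Suc'' pos_nat_def intro!: Least_equality)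
qed

(* Vertex i of the chain Lchain pos_nat h is (i, chain_vertex h i); vertex 0 is the origin. *)
definition chain_vertex :: "(nat \<Rightarrow> nat) \<Rightarrow> nat \<Rightarrow> real" where
  "chain_vertex h i = (if i = 0 then 0 else real (h i))"

lemma Lchain_pos_nat:
  assumes "0 \<le> x"
  shows "Lchain pos_nat h x = chain_vertex h (nat \<lfloor>x\<rfloor>) +
    (chain_vertex h (Suc (nat \<lfloor>x\<rfloor>)) - chain_vertex h (nat \<lfloor>x\<rfloor>)) * (x - real (nat \<lfloor>x\<rfloor>))"
proof -
  have "(LEAST i. x < real (Suc i)) = nat \<lfloor>x\<rfloor>"
    by (rule Least_equality) (use assms in linarith)+
  moreover have "(if i = 0 then 0 else real (enumerate pos_nat (i - 1))) = real i" for i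
    by (cases i) (auto simp: enumerate_pos_nat)
  moreover have "(if i = 0 then 0 else real (h (enumerate pos_nat (i - 1)))) = chain_vertex h i" for i
    by (cases i) (auto simp: enumerate_pos_nat chain_vertex_def)
  ultimately show ?thesis by (simp add: Lchain_def Let_def)
qed

lemma Lchain_pos_nat_segment:
  assumes "real i \<le> x" "x \<le> real i + 1"
  shows "Lchain pos_nat h x = chain_vertex h i + (chain_vertex h (Suc i) - chain_vertex h i) * (x - real i)"
proof (cases "x = real i + 1")
  case True
  then have "nat \<lfloor>x\<rfloor> = Suc i" by simp
  then show ?thesis using Lchain_pos_nat[of x h] True by simp
next
  case False
  then have "nat \<lfloor>x\<rfloor> = i" using assms by linarith
  then show ?thesis using Lchain_pos_nat[of x h] assms by simp
qed

lemma continuous_on_Lchain_pos_nat: "continuous_on {0..} (Lchain pos_nat h)"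
proof -
  have segment: "continuous_on {real i..real i + 1} (Lchain pos_nat h)" for i
  proof -
    have "continuous_on {real i..real i + 1}
        (\<lambda>x. chain_vertex h i + (chain_vertex h (Suc i) - chain_vertex h i) * (x - real i))"
      by (intro continuous_intros)
    then show ?thesis
      by (rule continuous_on_cong[THEN iffD1, rotated 2]) (auto simp: Lchain_pos_nat_segment)
  qed
  have initial: "continuous_on {0..real N} (Lchain pos_nat h)" for N
  proof (induction N)
    case 0
    then show ?case using continuous_on_subset[OF segment[of 0]] by simp
  next
    case (Suc N)
    have "{0..real (Suc N)} = {0..real N} \<union> {real N..real N + 1}" by auto
    then show ?case using continuous_on_closed_Un[OF _ _ Suc segment[of N]] by simp
  qed
  show ?thesis unfolding continuous_on_eq_continuous_within
  proof
    fix x :: real assume "x \<in> {0..}"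
    define N where "N = nat \<lceil>x\<rceil> + 1"
    have "x < real N" unfolding N_def by linarith
    then have "at x within {0..} = at x within {0..real N}"
      by (intro at_within_nhd[of _ "{..<real N}"]) auto
    moreover have "continuous (at x within {0..real N}) (Lchain pos_nat h)"
      using initial[of N] \<open>x \<in> {0..}\<close> \<open>x < real N\<close> unfolding continuous_on_eq_continuous_within by auto
    ultimately show "continuous (at x within {0..}) (Lchain pos_nat h)" by simp
  qed
qed

lemma Lchain_pos_nat_convex:
  assumes "0 \<le> x"
  obtains i t where "0 \<le> t" "t \<le> 1" "real i \<le> x" "x \<le> real i + 1"
    "Lchain pos_nat h x = (1 - t) * chain_vertex h i + t * chain_vertex h (Suc i)"
proof
  show "0 \<le> x - real (nat \<lfloor>x\<rfloor>)" "x - real (nat \<lfloor>x\<rfloor>) \<le> 1"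
    "real (nat \<lfloor>x\<rfloor>) \<le> x" "x \<le> real (nat \<lfloor>x\<rfloor>) + 1"
    using assms by linarith+
  show "Lchain pos_nat h x = (1 - (x - real (nat \<lfloor>x\<rfloor>))) * chain_vertex h (nat \<lfloor>x\<rfloor>) +
      (x - real (nat \<lfloor>x\<rfloor>)) * chain_vertex h (Suc (nat \<lfloor>x\<rfloor>))"
    using Lchain_pos_nat[OF assms, of h] by (simp add: algebra_simps)
qed

lemma Lchain_pos_nat_nonneg: "0 \<le> x \<Longrightarrow> 0 \<le> Lchain pos_nat h x"
  by (rule Lchain_pos_nat_convex[of x h]) (auto simp: chain_vertex_def)

lemma Lchain_pos_nat_le:
  fixes f :: "real \<Rightarrow> real"
  assumes mono: "\<And>x y. 0 \<le> x \<Longrightarrow> x \<le> y \<Longrightarrow> f x \<le> f y"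
    and nonneg: "\<And>x. 0 \<le> x \<Longrightarrow> 0 \<le> f x"
    and bound: "\<And>n. 1 \<le> n \<Longrightarrow> real (h n) \<le> 1 + f (real (n - 1))"
    and "0 \<le> x"
  shows "Lchain pos_nat h x \<le> 1 + f x"
proof (rule Lchain_pos_nat_convex[OF \<open>0 \<le> x\<close>])
  fix i t assume t: "0 \<le> t" "t \<le> 1" and i: "real i \<le> x" "x \<le> real i + 1"
    and L: "Lchain pos_nat h x = (1 - t) * chain_vertex h i + t * chain_vertex h (Suc i)"
  have vertex_le: "chain_vertex h j \<le> 1 + f x" if "real j \<le> x + 1" for j
  proof (cases "j = 0")
    case True
    then show ?thesis using nonneg[OF \<open>0 \<le> x\<close>] by (simp add: chain_vertex_def)
  next
    case False
    then have "real (h j) \<le> 1 + f (real (j - 1))" using bound by simp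
    also have "\<dots> \<le> 1 + f x" using mono[of "real (j - 1)" x] that False by (simp add: of_nat_diff)
    finally show ?thesis using False by (simp add: chain_vertex_def)
  qed
  have "(1 - t) * chain_vertex h i + t * chain_vertex h (Suc i) \<le> (1 - t) * (1 + f x) + t * (1 + f x)"
    using t i vertex_le[of i] vertex_le[of "Suc i"] by (intro add_mono mult_left_mono) auto
  then show ?thesis using L by (simp add: algebra_simps)
qed

lemma Lchain_pos_nat_bigo:
  fixes f :: "real \<Rightarrow> real"
  assumes "\<And>x y. 0 \<le> x \<Longrightarrow> x \<le> y \<Longrightarrow> f x \<le> f y" "\<And>x. 0 \<le> x \<Longrightarrow> 0 \<le> f x"
    and "\<And>n. 1 \<le> n \<Longrightarrow> real (h n) \<le> 1 + f (real (n - 1))"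
    and "eventually (\<lambda>x. 1 \<le> f x) at_top"
  shows "Lchain pos_nat h \<in> O(f)"
proof (rule bigoI[where c = 2])
  show "\<forall>\<^sub>F x in at_top. norm (Lchain pos_nat h x) \<le> 2 * norm (f x)"
    using assms(4) eventually_ge_at_top[of 0]
  proof eventually_elim
    case (elim x)
    then show ?case
      using Lchain_pos_nat_le[of f h x, OF assms(1-3)] Lchain_pos_nat_nonneg[of x h] by simp
  qed
qed

lemma upper_env_le:
  assumes "1 \<le> n" "\<And>k. 1 \<le> k \<Longrightarrow> k \<le> n \<Longrightarrow> real (g k) \<le> B"
  shows "real (upper_env g n) \<le> B"
proof -
  have "{g k | k. 1 \<le> k \<and> k \<le> n} = g ` {1..n}" by auto
  then have "upper_env g n \<in> g ` {1..n}" unfolding upper_env_def using assms(1) by (simp add: Max_in)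
  then show ?thesis using assms(2) by auto
qed

lemma lower_env_le:
  assumes "1 \<le> B" "\<And>k. 1 \<le> k \<Longrightarrow> k \<le> n \<Longrightarrow> real (g k) \<le> B"
  shows "real (lower_env g n) \<le> B"
proof -
  let ?A = "{g k | k. 1 \<le> k \<and> k \<le> n \<and> (\<forall>l\<ge>k. g l \<ge> g k)} \<union> {1}"
  have "finite ?A" by (rule finite_subset[of _ "g ` {1..n} \<union> {1}"]) auto
  then have "lower_env g n \<in> ?A" unfolding lower_env_def by (intro Max_in) auto
  then show ?thesis using assms by auto
qed

context
  fixes T :: "nat \<Rightarrow> nat"
  assumes T_pos: "\<forall>n\<ge>1. T n \<ge> 1"
begin

lemma Tstar_eq:
  assumes "0 \<le> x"
  shows "Tstar T x = real (\<Sum>k=1..nat \<lfloor>x\<rfloor>. T k) + real (T (Suc (nat \<lfloor>x\<rfloor>))) * (x - real (nat \<lfloor>x\<rfloor>))"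
  using Lchain_pos_nat[OF assms, of "\<lambda>n. \<Sum>k=1..n. T k"]
  by (simp add: Tstar_def chain_vertex_def)

lemma Tstar_of_nat: "Tstar T (real c) = real (\<Sum>k=1..c. T k)"
  using Tstar_eq[of "real c"] by simp

lemma Tstar_strict_mono:
  assumes "0 \<le> x" "x < y"
  shows "Tstar T x < Tstar T y"
proof -
  define i where "i = nat \<lfloor>x\<rfloor>"
  define j where "j = nat \<lfloor>y\<rfloor>"
  have x: "real i \<le> x" "x < real i + 1" and y: "real j \<le> y" "y < real j + 1"
    using assms unfolding i_def j_def by linarith+
  have "i \<le> j" using assms unfolding i_def j_def by (simp add: floor_mono nat_mono)
  have T_Suc: "1 \<le> real (T (Suc i))" using T_pos by simp
  have Tx: "Tstar T x = real (\<Sum>k=1..i. T k) + real (T (Suc i)) * (x - real i)"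
    using Tstar_eq[OF assms(1)] unfolding i_def .
  have Ty: "Tstar T y = real (\<Sum>k=1..j. T k) + real (T (Suc j)) * (y - real j)"
    using Tstar_eq[of y] assms unfolding j_def by simp
  show ?thesis
  proof (cases "i = j")
    case True
    then show ?thesis using Tx Ty T_Suc assms(2) by (simp add: mult_strict_left_mono)
  next
    case False
    then have "Suc i \<le> j" using \<open>i \<le> j\<close> by simp
    have "Tstar T x < real (\<Sum>k=1..i. T k) + real (T (Suc i))"
      using Tx T_Suc x mult_strict_left_mono[of "x - real i" 1 "real (T (Suc i))"] by simp
    also have "\<dots> = real (\<Sum>k=1..Suc i. T k)" by simp
    also have "\<dots> \<le> real (\<Sum>k=1..j. T k)"
      unfolding of_nat_le_iff using \<open>Suc i \<le> j\<close> by (intro sum_mono2) auto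
    also have "\<dots> \<le> Tstar T y" using Ty y by simp
    finally show ?thesis .
  qed
qed

lemma le_Tstar:
  assumes "0 \<le> x"
  shows "x \<le> Tstar T x"
proof -
  have "real (nat \<lfloor>x\<rfloor>) \<le> real (\<Sum>k=1..nat \<lfloor>x\<rfloor>. T k)"
    unfolding of_nat_le_iff using T_pos sum_mono[of "{1..nat \<lfloor>x\<rfloor>}" "\<lambda>_. 1::nat" T] by simp
  moreover have "x - real (nat \<lfloor>x\<rfloor>) \<le> real (T (Suc (nat \<lfloor>x\<rfloor>))) * (x - real (nat \<lfloor>x\<rfloor>))"
    using T_pos assms mult_right_mono[of 1 "real (T (Suc (nat \<lfloor>x\<rfloor>)))" "x - real (nat \<lfloor>x\<rfloor>)"]
    by simp
  ultimately show ?thesis using Tstar_eq[OF assms] by linarith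
qed

lemma Tstar_Tstar_inv:
  assumes "0 \<le> y"
  shows "0 \<le> Tstar_inv T y \<and> Tstar T (Tstar_inv T y) = y"
proof -
  have "\<exists>x\<ge>0. x \<le> y \<and> Tstar T x = y"
  proof (intro IVT')
    show "Tstar T 0 \<le> y" using Tstar_of_nat[of 0] assms by simp
    show "continuous_on {0..y} (Tstar T)"
      unfolding Tstar_def by (rule continuous_on_subset[OF continuous_on_Lchain_pos_nat]) auto
  qed (use assms le_Tstar in auto)
  then obtain x where x: "0 \<le> x" "Tstar T x = y" by blast
  moreover have unique: "z = x" if "0 \<le> z" "Tstar T z = y" for z
  proof (rule ccontr)
    assume "z \<noteq> x"
    then have "Tstar T z \<noteq> Tstar T x"
      using Tstar_strict_mono[of z x] Tstar_strict_mono[of x z] that(1) x(1) by (auto simp: neq_iff)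
    then show False using that(2) x(2) by simp
  qed
  ultimately have "Tstar_inv T y = x"
    unfolding Tstar_inv_def by (intro the_equality) (simp_all add: unique)
  then show ?thesis using x by simp
qed

lemma Tstar_inv_mono:
  assumes "0 \<le> x" "x \<le> y"
  shows "Tstar_inv T x \<le> Tstar_inv T y"
proof (rule ccontr)
  assume "\<not> ?thesis"
  moreover have "0 \<le> Tstar_inv T y" using Tstar_Tstar_inv[of y] assms by simp
  ultimately have "Tstar T (Tstar_inv T y) < Tstar T (Tstar_inv T x)"
    using Tstar_strict_mono[of "Tstar_inv T y" "Tstar_inv T x"] by simp
  then show False using Tstar_Tstar_inv[of x] Tstar_Tstar_inv[of y] assms by simp
qed

lemma Tstar_inv_ge:
  assumes "real (\<Sum>k=1..c. T k) \<le> y"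
  shows "real c \<le> Tstar_inv T y"
proof (rule ccontr)
  assume "\<not> ?thesis"
  moreover have "0 \<le> y" using assms by (meson of_nat_0_le_iff order_trans)
  moreover have "0 \<le> Tstar_inv T y" using Tstar_Tstar_inv[OF \<open>0 \<le> y\<close>] by simp
  ultimately have "Tstar T (Tstar_inv T y) < Tstar T (real c)"
    using Tstar_strict_mono[of "Tstar_inv T y" "real c"] by simp
  then show False using Tstar_Tstar_inv[of y] Tstar_of_nat[of c] assms \<open>0 \<le> y\<close> by simp
qed

lemma Lchain_pos_nat_bigo_Tstar_inv:
  assumes "\<And>n. 1 \<le> n \<Longrightarrow> real (h n) \<le> 1 + Tstar_inv T (real (n - 1))"
  shows "Lchain pos_nat h \<in> O(Tstar_inv T)"
proof (rule Lchain_pos_nat_bigo[of "Tstar_inv T" h, OF Tstar_inv_mono _ assms])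
  show "0 \<le> Tstar_inv T x" if "0 \<le> x" for x using Tstar_Tstar_inv[OF that] by simp
  show "eventually (\<lambda>x. 1 \<le> Tstar_inv T x) at_top"
    using eventually_ge_at_top[of "real (T 1)"] by eventually_elim (use Tstar_inv_ge[of 1] in simp)
qed

end

section \<open>Runs of Turing machines\<close>

definition shift_config :: "int \<Rightarrow> tm_config \<Rightarrow> tm_config" where
  "shift_config d = (\<lambda>(q, tp, h). (q, \<lambda>i. tp (i - d), h + d))"

lemma tm_step_shift_config:
  "tm_step \<delta> (shift_config d c) = map_option (shift_config d) (tm_step \<delta> c)"
proof -
  obtain q tp h where c: "c = (q, tp, h)" by (cases c)
  have "(\<lambda>i. tp (i - d))(h + d := b) = (\<lambda>i. (tp(h := b)) (i - d))" for b
    by (auto simp: fun_eq_iff)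
  then show ?thesis
    by (auto simp: c shift_config_def tm_step_def split: option.split)
qed

lemma tm_run_shift_config:
  "tm_run \<delta> (shift_config d c) j = map_option (shift_config d) (tm_run \<delta> c j)"
  by (induction j)
    (simp_all add: tm_step_shift_config option.map_comp bind_map_option map_option_bind comp_def)

lemma tm_run_defined_le: "tm_run \<delta> c m \<noteq> None \<Longrightarrow> j \<le> m \<Longrightarrow> tm_run \<delta> c j \<noteq> None"
proof (induction m)
  case (Suc m)
  then show ?case by (cases "tm_run \<delta> c m") (auto simp: le_Suc_eq)
qed simp

lemma tm_valid_transitionD:
  "tm_valid Q \<Gamma> \<delta> q0 \<Longrightarrow> \<delta> q a = Some (q', b, d) \<Longrightarrow> q \<in> Q \<and> a \<in> \<Gamma> \<and> q' \<in> Q \<and> b \<in> \<Gamma>"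
  unfolding tm_valid_def by blast

lemma tm_run_closed:
  assumes "tm_valid Q \<Gamma> \<delta> q0" "q \<in> Q" "\<forall>i. tp i \<in> \<Gamma>"
    and "tm_run \<delta> (q, tp, h) j = Some (q', tp', h')"
  shows "q' \<in> Q \<and> (\<forall>i. tp' i \<in> \<Gamma>)"
  using assms(4)
proof (induction j arbitrary: q' tp' h')
  case (Suc j)
  then obtain q1 tp1 h1 where "tm_run \<delta> (q, tp, h) j = Some (q1, tp1, h1)"
    "tm_step \<delta> (q1, tp1, h1) = Some (q', tp', h')"
    by (cases "tm_run \<delta> (q, tp, h) j") auto
  then show ?case using Suc.IH tm_valid_transitionD[OF assms(1)]
    by (auto simp: tm_step_def split: option.splits)
qed (use assms in simp)

lemma unary_tape_shift: "unary_tape d n = (\<lambda>i. unary_tape 0 n (i - d))"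
  by (auto simp: unary_tape_def fun_eq_iff)

section \<open>Words encoding configurations\<close>

(*
  Symbols are classified modulo 4: tape symbols are 0, states 1, the end markers and the tally
  symbol 2, and the markers rewind_sym and fork_sym 3.  The odd symbols are the control symbols:
  every left side of a rule contains exactly one of them and so does every reachable word, which
  by control_split_unique pins down where a rule can apply.
*)
definition tape_sym :: "nat \<Rightarrow> nat" where "tape_sym a = 4 * a"
definition state_sym :: "nat \<Rightarrow> nat" where "state_sym q = 4 * q + 1"

abbreviation left_end :: nat where "left_end \<equiv> 2"
abbreviation right_end :: nat where "right_end \<equiv> 6"
abbreviation tally_sym :: nat where "tally_sym \<equiv> 10"
abbreviation rewind_sym :: nat where "rewind_sym \<equiv> 3"
abbreviation fork_sym :: nat where "fork_sym \<equiv> 7"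

definition control_free :: "nat list \<Rightarrow> bool" where
  "control_free xs \<longleftrightarrow> (\<forall>x\<in>set xs. even x)"

lemma tape_sym_eq_iff [simp]: "tape_sym a = tape_sym b \<longleftrightarrow> a = b"
  by (simp add: tape_sym_def)

lemma state_sym_eq_iff [simp]: "state_sym p = state_sym q \<longleftrightarrow> p = q"
  by (simp add: state_sym_def)

lemma even_tape_sym [simp]: "even (tape_sym a)"
  by (simp add: tape_sym_def)

lemma odd_state_sym [simp]: "odd (state_sym q)"
  by (simp add: state_sym_def)

lemma tape_sym_neq [simp]:
  "tape_sym a \<noteq> left_end" "tape_sym a \<noteq> right_end" "tape_sym a \<noteq> tally_sym"
  "tape_sym a \<noteq> rewind_sym" "tape_sym a \<noteq> fork_sym" "tape_sym a \<noteq> state_sym q"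
  by (simp_all add: tape_sym_def state_sym_def) presburger+

lemma state_sym_neq [simp]:
  "state_sym q \<noteq> left_end" "state_sym q \<noteq> right_end" "state_sym q \<noteq> tally_sym"
  "state_sym q \<noteq> rewind_sym" "state_sym q \<noteq> fork_sym"
  by (simp_all add: state_sym_def) presburger+

lemmas sym_neq_sym [simp] = tape_sym_neq[symmetric] state_sym_neq[symmetric]

lemma control_free_simps [simp]:
  "control_free []"
  "control_free (x # xs) \<longleftrightarrow> even x \<and> control_free xs"
  "control_free (xs @ ys) \<longleftrightarrow> control_free xs \<and> control_free ys"
  "control_free (replicate m x) \<longleftrightarrow> m = 0 \<or> even x"
  by (auto simp: control_free_def)

lemma count_list_replicate: "count_list (replicate m a) b = (if a = b then m else 0)"
  by (induction m) auto

lemma control_split_unique: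
  assumes "xs @ c # ys = xs' @ c' # ys'"
    and "control_free xs" "control_free ys" "odd c" "odd c'"
  shows "xs = xs' \<and> c = c' \<and> ys = ys'"
  using assms
proof (induction xs arbitrary: xs')
  case Nil
  then show ?case by (cases xs') (auto simp: control_free_def)
next
  case (Cons x xs)
  then show ?case by (cases xs') auto
qed

definition tape_word :: "(int \<Rightarrow> nat) \<Rightarrow> int \<Rightarrow> int \<Rightarrow> nat list" where
  "tape_word tp a b = map (\<lambda>i. tape_sym (tp (a + int i))) [0..<nat (b - a)]"

lemma tape_word_empty [simp]: "b \<le> a \<Longrightarrow> tape_word tp a b = []"
  by (simp add: tape_word_def)

lemma tape_word_Cons: "a < b \<Longrightarrow> tape_word tp a b = tape_sym (tp a) # tape_word tp (a + 1) b"
proof -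
  assume "a < b"
  then have "nat (b - a) = Suc (nat (b - (a + 1)))" by simp
  then show ?thesis
    unfolding tape_word_def by (simp add: map_upt_Suc algebra_simps del: upt_Suc)
qed

lemma tape_word_append:
  "a \<le> m \<Longrightarrow> m \<le> b \<Longrightarrow> tape_word tp a b = tape_word tp a m @ tape_word tp m b"
proof (induction "nat (m - a)" arbitrary: a)
  case (Suc k)
  then have "tape_word tp (a + 1) b = tape_word tp (a + 1) m @ tape_word tp m b"
    by (intro Suc.hyps) auto
  then show ?case using Suc by (simp add: tape_word_Cons[of a])
qed simp

lemma tape_word_snoc: "a < b \<Longrightarrow> tape_word tp a b = tape_word tp a (b - 1) @ [tape_sym (tp (b - 1))]"
  using tape_word_append[of a "b - 1" b tp] tape_word_Cons[of "b - 1" b tp] by simp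

lemma tape_word_cong:
  "(\<And>i. a \<le> i \<Longrightarrow> i < b \<Longrightarrow> tp i = tp' i) \<Longrightarrow> tape_word tp a b = tape_word tp' a b"
  unfolding tape_word_def by (auto intro!: map_cong)

lemma tape_word_upd_outside [simp]:
  "h < a \<or> b \<le> h \<Longrightarrow> tape_word (tp(h := x)) a b = tape_word tp a b"
  by (rule tape_word_cong) auto

lemma control_free_tape_word [simp]: "control_free (tape_word tp a b)"
  by (auto simp: tape_word_def control_free_def)

lemma count_tape_word:
  "count_list (tape_word tp a b) (tape_sym 1) = card {i. a \<le> i \<and> i < b \<and> tp i = 1}"
proof (induction "nat (b - a)" arbitrary: a)
  case 0
  then have empty: "{i. a \<le> i \<and> i < b \<and> tp i = 1} = {}" by auto
  show ?case using 0 unfolding empty by simp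
next
  case (Suc k)
  then have "a < b" by simp
  have "{i. a \<le> i \<and> i < b \<and> tp i = 1} =
      (if tp a = 1 then insert a else id) {i. a + 1 \<le> i \<and> i < b \<and> tp i = 1}"
    using \<open>a < b\<close> by (auto simp: order_le_less)
  moreover have "finite {i. a + 1 \<le> i \<and> i < b \<and> tp i = 1}"
    by (rule finite_subset[of _ "{a + 1..<b}"]) auto
  moreover have "count_list (tape_word tp (a + 1) b) (tape_sym 1) = card {i. a + 1 \<le> i \<and> i < b \<and> tp i = 1}"
    using Suc by (intro Suc.hyps) auto
  ultimately show ?case using \<open>a < b\<close> by (simp add: tape_word_Cons)
qed

lemma count_tape_word_unary:
  "lo \<le> p \<Longrightarrow> p + int n \<le> hi \<Longrightarrow> count_list (tape_word (unary_tape p n) lo hi) (tape_sym 1) = n"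
proof -
  assume "lo \<le> p" "p + int n \<le> hi"
  then have "{i. lo \<le> i \<and> i < hi \<and> unary_tape p n i = 1} = {p..<p + int n}"
    by (auto simp: unary_tape_def)
  then show ?thesis by (simp only: count_tape_word) simp
qed

(* The control symbol C stands immediately left of the head cell h; [lo, hi) is the part of the
   tape written out. *)
definition config_word :: "nat \<Rightarrow> (int \<Rightarrow> nat) \<Rightarrow> int \<Rightarrow> int \<Rightarrow> int \<Rightarrow> nat list" where
  "config_word C tp h lo hi = (left_end # tape_word tp lo h) @ C # tape_word tp h hi @ [right_end]"

lemma config_word_head:
  "h < hi \<Longrightarrow> config_word C tp h lo hi =
     (left_end # tape_word tp lo h) @ C # tape_sym (tp h) # tape_word tp (h + 1) hi @ [right_end]"
  unfolding config_word_def by (simp add: tape_word_Cons)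

definition window :: "(int \<Rightarrow> nat) \<Rightarrow> int \<Rightarrow> int \<Rightarrow> int \<Rightarrow> bool" where
  "window tp lo h hi \<longleftrightarrow> lo \<le> h \<and> h \<le> hi \<and> (\<forall>i. tp i \<noteq> 0 \<longrightarrow> lo \<le> i \<and> i < hi)"

lemma window_nonblank: "window tp lo h hi \<Longrightarrow> tp i \<noteq> 0 \<Longrightarrow> lo \<le> i \<and> i < hi"
  unfolding window_def by blast

lemma window_extend_right: "window tp lo h hi \<Longrightarrow> window tp lo h (hi + 1)"
  unfolding window_def by (meson add_increasing2 less_add_one order_less_trans zero_le_one)

lemma window_extend_left: "window tp lo h hi \<Longrightarrow> window tp (lo - 1) h hi"
  unfolding window_def by (smt (verit))

lemma window_write_move:
  assumes "window tp lo h hi" "h < hi" "lo \<le> h'" "h' \<le> hi"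
  shows "window (tp(h := b)) lo h' hi"
  using assms unfolding window_def by auto

(* Each padding step (extending the window by a blank cell at the end the head has reached)
   decreases this measure, so only finitely many of them precede a simulated move. *)
definition padding_debt :: "int \<Rightarrow> int \<Rightarrow> int \<Rightarrow> nat" where
  "padding_debt lo h hi = (if h = hi then 2 else 0) + (if h = lo then 1 else 0)"

definition fork_word :: "nat list \<Rightarrow> bool" where
  "fork_word w \<longleftrightarrow> (\<exists>x y. control_free x \<and> control_free y \<and> w = x @ fork_sym # y)"

section \<open>The multiway system simulating a halter\<close>

locale halter_sim =
  fixes T :: "nat \<Rightarrow> nat" and Q \<Gamma> :: "nat set" and \<delta> :: tm_delta and q0 :: nat
  assumes halter: "is_halter T Q \<Gamma> \<delta> q0"
begin

lemma machine_valid: "tm_valid Q \<Gamma> \<delta> q0"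
  using halter by (simp add: is_halter_def)

lemma finite_states: "finite Q" and finite_symbols: "finite \<Gamma>" and blank_in_symbols: "0 \<in> \<Gamma>"
  and one_in_symbols: "1 \<in> \<Gamma>" and start_in_states: "q0 \<in> Q"
  using machine_valid by (auto simp: tm_valid_def)

lemmas transitionD = tm_valid_transitionD[OF machine_valid]

(*
  A rule (lc, C, rc, t) rewrites lc @ C # rc into t.  A left move at the left end first inserts a
  blank cell, and a state at the right end first appends one.  When the machine halts, the state
  symbol is replaced either by rewind_sym, which walks right over blanks to the first 1 and
  restarts the machine there, or by fork_sym, which afterwards only emits tally symbols.
*)
definition head_rules :: "nat \<Rightarrow> nat \<Rightarrow> (nat list \<times> nat \<times> nat list \<times> nat list) set" where
  "head_rules q a = (case \<delta> q a of
      None \<Rightarrow> {([], state_sym q, [tape_sym a], [rewind_sym, tape_sym a]),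
              ([], state_sym q, [tape_sym a], [fork_sym, tape_sym a])}
    | Some (q', b, d) \<Rightarrow>
        if d then {([], state_sym q, [tape_sym a], [tape_sym b, state_sym q'])}
        else insert ([left_end], state_sym q, [tape_sym a], [left_end, tape_sym 0, state_sym q, tape_sym a])
          ((\<lambda>c. ([tape_sym c], state_sym q, [tape_sym a], [state_sym q', tape_sym c, tape_sym b])) ` \<Gamma>))"

definition ctrl_rules :: "(nat list \<times> nat \<times> nat list \<times> nat list) set" where
  "ctrl_rules = (\<Union>q\<in>Q. \<Union>a\<in>\<Gamma>. head_rules q a)
     \<union> (\<lambda>q. ([], state_sym q, [right_end], [state_sym q, tape_sym 0, right_end])) ` Q
     \<union> {([], rewind_sym, [tape_sym 0], [tape_sym 0, rewind_sym]),
        ([], rewind_sym, [tape_sym 1], [state_sym q0, tape_sym 1]),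
        ([], fork_sym, [], [fork_sym, tally_sym])}"

definition rules :: "(nat list \<times> nat list) set" where
  "rules = (\<lambda>(lc, C, rc, t). (lc @ C # rc, t)) ` ctrl_rules"

lemma head_rules_shape:
  "(lc, C, rc, t) \<in> head_rules q a \<Longrightarrow> C = state_sym q \<and> rc = [tape_sym a] \<and> control_free lc"
  by (auto simp: head_rules_def split: option.splits if_splits)

lemma finite_rules: "finite rules"
proof -
  have "finite (head_rules q a)" for q a
    using finite_symbols by (auto simp: head_rules_def split: option.splits)
  then show ?thesis
    unfolding rules_def ctrl_rules_def using finite_states finite_symbols by auto
qed

lemma ctrl_rules_control:
  "(lc, C, rc, t) \<in> ctrl_rules \<Longrightarrow> control_free lc \<and> control_free rc \<and> odd C"
  unfolding ctrl_rules_def by (auto dest: head_rules_shape)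

lemma successors_control:
  assumes "control_free pre" "control_free post" "odd C"
  shows "mw_step rules `` {pre @ C # post} =
    {x @ t @ y | x y lc rc t. (lc, C, rc, t) \<in> ctrl_rules \<and> pre = x @ lc \<and> post = rc @ y}"
proof (intro equalityI subsetI)
  fix w assume "w \<in> mw_step rules `` {pre @ C # post}"
  then obtain x y lc C' rc t where rule: "(lc, C', rc, t) \<in> ctrl_rules"
    and eq: "pre @ C # post = (x @ lc) @ C' # rc @ y" and w: "w = x @ t @ y"
    unfolding mw_step_def rules_def by auto
  have "pre = x @ lc \<and> C = C' \<and> post = rc @ y"
    using control_split_unique[OF eq] assms ctrl_rules_control[OF rule] by simp
  then show "w \<in> {x @ t @ y | x y lc rc t. (lc, C, rc, t) \<in> ctrl_rules \<and> pre = x @ lc \<and> post = rc @ y}"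
    using rule w by blast
next
  fix w assume "w \<in> {x @ t @ y | x y lc rc t. (lc, C, rc, t) \<in> ctrl_rules \<and> pre = x @ lc \<and> post = rc @ y}"
  then obtain x y lc rc t where "(lc @ C # rc, t) \<in> rules" "pre @ C # post = x @ (lc @ C # rc) @ y"
    "w = x @ t @ y"
    unfolding rules_def by force
  then show "w \<in> mw_step rules `` {pre @ C # post}"
    unfolding mw_step_def by blast
qed

lemma ctrl_rules_state:
  "(lc, state_sym q, rc, t) \<in> ctrl_rules \<longleftrightarrow> q \<in> Q \<and>
     ((\<exists>a\<in>\<Gamma>. (lc, state_sym q, rc, t) \<in> head_rules q a) \<or>
      (lc = [] \<and> rc = [right_end] \<and> t = [state_sym q, tape_sym 0, right_end]))"
proof
  assume "(lc, state_sym q, rc, t) \<in> ctrl_rules"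
  then show "q \<in> Q \<and> ((\<exists>a\<in>\<Gamma>. (lc, state_sym q, rc, t) \<in> head_rules q a) \<or>
      (lc = [] \<and> rc = [right_end] \<and> t = [state_sym q, tape_sym 0, right_end]))"
    unfolding ctrl_rules_def using head_rules_shape by fastforce
qed (auto simp: ctrl_rules_def)

lemma ctrl_rules_rewind:
  "(lc, rewind_sym, rc, t) \<in> ctrl_rules \<longleftrightarrow> lc = [] \<and>
     (rc = [tape_sym 0] \<and> t = [tape_sym 0, rewind_sym] \<or> rc = [tape_sym 1] \<and> t = [state_sym q0, tape_sym 1])"
  unfolding ctrl_rules_def by (auto dest: head_rules_shape)

lemma ctrl_rules_fork:
  "(lc, fork_sym, rc, t) \<in> ctrl_rules \<longleftrightarrow> lc = [] \<and> rc = [] \<and> t = [fork_sym, tally_sym]"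
  unfolding ctrl_rules_def by (auto dest: head_rules_shape)

lemma ctrl_rules_state_head_iff:
  assumes "q \<in> Q" "a \<in> \<Gamma>"
  shows "(lc, state_sym q, rc, t) \<in> ctrl_rules \<and> pre = x @ lc \<and> tape_sym a # rest = rc @ y \<longleftrightarrow>
    (lc, state_sym q, [tape_sym a], t) \<in> head_rules q a \<and> pre = x @ lc \<and> rc = [tape_sym a] \<and> y = rest"
proof
  assume asm: "(lc, state_sym q, rc, t) \<in> ctrl_rules \<and> pre = x @ lc \<and> tape_sym a # rest = rc @ y"
  then obtain a' where "(lc, state_sym q, rc, t) \<in> head_rules q a'"
    by (auto simp: ctrl_rules_state)
  moreover from this have "rc = [tape_sym a']" using head_rules_shape by blast
  ultimately show "(lc, state_sym q, [tape_sym a], t) \<in> head_rules q a \<and> pre = x @ lc \<and>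
      rc = [tape_sym a] \<and> y = rest"
    using asm by auto
qed (use assms in \<open>auto simp: ctrl_rules_state\<close>)

lemma successors_state_head:
  assumes "control_free pre" "control_free rest" "q \<in> Q" "a \<in> \<Gamma>"
  shows "mw_step rules `` {pre @ state_sym q # tape_sym a # rest} =
    {x @ t @ rest | x lc t. (lc, state_sym q, [tape_sym a], t) \<in> head_rules q a \<and> pre = x @ lc}"
  using assms by (simp add: successors_control ctrl_rules_state_head_iff)

lemma successors_state_head_eq:
  assumes "control_free pre" "control_free rest" "q \<in> Q" "a \<in> \<Gamma>"
    and "(lc, state_sym q, [tape_sym a], t) \<in> head_rules q a" "pre = x @ lc"
    and "\<And>x' lc' t'. (lc', state_sym q, [tape_sym a], t') \<in> head_rules q a \<Longrightarrow> pre = x' @ lc' \<Longrightarrow>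
      x' @ t' = x @ t"
  shows "mw_step rules `` {pre @ state_sym q # tape_sym a # rest} = {x @ t @ rest}"
proof -
  have "x' @ t' @ rest = x @ t @ rest"
    if "(lc', state_sym q, [tape_sym a], t') \<in> head_rules q a" "pre = x' @ lc'" for x' lc' t'
    using assms(7)[OF that] by (metis append_assoc)
  then show ?thesis
    unfolding successors_state_head[OF assms(1-4)] using assms(5,6) by blast
qed

lemma successors_state_head_no_left_context:
  assumes "control_free pre" "control_free rest" "q \<in> Q" "a \<in> \<Gamma>"
    and "\<And>lc C rc t. (lc, C, rc, t) \<in> head_rules q a \<Longrightarrow> lc = []"
  shows "mw_step rules `` {pre @ state_sym q # tape_sym a # rest} =
    (\<lambda>(_, _, _, t). pre @ t @ rest) ` head_rules q a"
proof -
  let ?succ = "{x @ t @ rest | x lc t. (lc, state_sym q, [tape_sym a], t) \<in> head_rules q a \<and> pre = x @ lc}"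
  have "?succ = (\<lambda>(_, _, _, t). pre @ t @ rest) ` head_rules q a"
  proof (intro equalityI subsetI)
    fix w assume "w \<in> ?succ"
    then obtain x lc t where r: "(lc, state_sym q, [tape_sym a], t) \<in> head_rules q a" "pre = x @ lc"
      "w = x @ t @ rest"
      by blast
    with assms(5)[OF r(1)] show "w \<in> (\<lambda>(_, _, _, t). pre @ t @ rest) ` head_rules q a"
      by (auto intro: rev_image_eqI)
  next
    fix w assume "w \<in> (\<lambda>(_, _, _, t). pre @ t @ rest) ` head_rules q a"
    then obtain lc C rc t where r: "(lc, C, rc, t) \<in> head_rules q a" "w = pre @ t @ rest" by auto
    with assms(5)[OF r(1)] head_rules_shape[OF r(1)]
    show "w \<in> ?succ" by force
  qed
  then show ?thesis using successors_state_head[OF assms(1-4)] by simp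
qed

lemma successors_control_eq:
  assumes "control_free pre" "control_free post" "odd C"
    and "(lc, C, rc, t) \<in> ctrl_rules" "pre = x @ lc" "post = rc @ y" "w = x @ t @ y"
    and "\<And>lc' rc' t' x' y'. (lc', C, rc', t') \<in> ctrl_rules \<Longrightarrow> pre = x' @ lc' \<Longrightarrow> post = rc' @ y' \<Longrightarrow>
      x' @ t' @ y' = w"
  shows "mw_step rules `` {pre @ C # post} = {w}"
  using assms(4-) by (subst successors_control[OF assms(1-3)]) blast

lemma successors_state_right_end:
  assumes "control_free pre" "q \<in> Q"
  shows "mw_step rules `` {pre @ [state_sym q, right_end]} = {pre @ [state_sym q, tape_sym 0, right_end]}"
  using assms
  by (intro successors_control_eq[where lc = "[]" and rc = "[right_end]" and y = "[]"])
    (auto simp: ctrl_rules_state dest: head_rules_shape)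

lemma successors_rewind_sym_blank:
  assumes "control_free pre" "control_free rest"
  shows "mw_step rules `` {pre @ rewind_sym # tape_sym 0 # rest} = {pre @ tape_sym 0 # rewind_sym # rest}"
  using assms
  by (intro successors_control_eq[where lc = "[]" and rc = "[tape_sym 0]" and y = rest])
    (auto simp: ctrl_rules_rewind)

lemma successors_rewind_sym_one:
  assumes "control_free pre" "control_free rest"
  shows "mw_step rules `` {pre @ rewind_sym # tape_sym 1 # rest} = {pre @ state_sym q0 # tape_sym 1 # rest}"
  using assms
  by (intro successors_control_eq[where lc = "[]" and rc = "[tape_sym 1]" and y = rest])
    (auto simp: ctrl_rules_rewind)

lemma successors_fork:
  assumes "control_free pre" "control_free post"
  shows "mw_step rules `` {pre @ fork_sym # post} = {pre @ fork_sym # tally_sym # post}"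
  using assms by (simp add: successors_control ctrl_rules_fork)

lemma successors_config_pad_right:
  assumes "q \<in> Q" "tp h = 0"
  shows "mw_step rules `` {config_word (state_sym q) tp h lo h} =
    {config_word (state_sym q) tp h lo (h + 1)}"
  using assms successors_state_right_end[of "left_end # tape_word tp lo h" q]
  by (simp add: config_word_def tape_word_Cons tape_sym_def)

lemma successors_config_move_right:
  assumes "lo \<le> h" "h < hi" "\<delta> q (tp h) = Some (q', b, True)"
  shows "mw_step rules `` {config_word (state_sym q) tp h lo hi} =
    {config_word (state_sym q') (tp(h := b)) (h + 1) lo hi}"
proof -
  have "tape_word (tp(h := b)) lo (h + 1) = tape_word tp lo h @ [tape_sym b]"
    using tape_word_snoc[of lo "h + 1" "tp(h := b)"] assms(1) by simp
  then have "config_word (state_sym q') (tp(h := b)) (h + 1) lo hi =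
      (left_end # tape_word tp lo h) @ [tape_sym b, state_sym q'] @ tape_word tp (h + 1) hi @ [right_end]"
    by (simp add: config_word_def)
  moreover have "head_rules q (tp h) = {([], state_sym q, [tape_sym (tp h)], [tape_sym b, state_sym q'])}"
    using assms(3) by (simp add: head_rules_def)
  ultimately show ?thesis
    using assms(2) transitionD[OF assms(3)] successors_state_head_no_left_context[of
        "left_end # tape_word tp lo h" "tape_word tp (h + 1) hi @ [right_end]" q "tp h"]
    by (simp add: config_word_head)
qed

lemma successors_config_move_left:
  assumes "lo < h" "h < hi" "\<delta> q (tp h) = Some (q', b, False)" "tp (h - 1) \<in> \<Gamma>"
  shows "mw_step rules `` {config_word (state_sym q) tp h lo hi} =
    {config_word (state_sym q') (tp(h := b)) (h - 1) lo hi}"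
proof -
  define c where "c = tp (h - 1)"
  define pre where "pre = left_end # tape_word tp lo (h - 1)"
  define rest where "rest = tape_word tp (h + 1) hi @ [right_end]"
  have "config_word (state_sym q) tp h lo hi = (pre @ [tape_sym c]) @ state_sym q # tape_sym (tp h) # rest"
    using assms by (simp add: c_def pre_def rest_def config_word_head tape_word_snoc[of lo h])
  moreover have "config_word (state_sym q') (tp(h := b)) (h - 1) lo hi =
      pre @ [state_sym q', tape_sym c, tape_sym b] @ rest"
    using assms by (simp add: c_def pre_def rest_def config_word_def tape_word_Cons)
  moreover have "mw_step rules `` {(pre @ [tape_sym c]) @ state_sym q # tape_sym (tp h) # rest} =
      {pre @ [state_sym q', tape_sym c, tape_sym b] @ rest}"
    using transitionD[OF assms(3)] assms(3,4) unfolding c_def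
    by (intro successors_state_head_eq[where lc = "[tape_sym (tp (h - 1))]" and x = pre])
      (auto simp: pre_def rest_def head_rules_def)
  ultimately show ?thesis by simp
qed

lemma successors_config_pad_left:
  assumes "h < hi" "\<delta> q (tp h) = Some (q', b, False)" "tp (h - 1) = 0"
  shows "mw_step rules `` {config_word (state_sym q) tp h h hi} =
    {config_word (state_sym q) tp h (h - 1) hi}"
proof -
  define rest where "rest = tape_word tp (h + 1) hi @ [right_end]"
  have "config_word (state_sym q) tp h h hi = [left_end] @ state_sym q # tape_sym (tp h) # rest"
    using assms by (simp add: rest_def config_word_head)
  moreover have "config_word (state_sym q) tp h (h - 1) hi =
      [] @ [left_end, tape_sym 0, state_sym q, tape_sym (tp h)] @ rest"
    using assms by (simp add: rest_def config_word_head tape_word_Cons)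
  moreover have "mw_step rules `` {[left_end] @ state_sym q # tape_sym (tp h) # rest} =
      {[] @ [left_end, tape_sym 0, state_sym q, tape_sym (tp h)] @ rest}"
    using transitionD[OF assms(2)] assms(2)
    by (intro successors_state_head_eq[where lc = "[left_end]" and x = "[]"])
      (auto simp: rest_def head_rules_def)
  ultimately show ?thesis by simp
qed

lemma successors_config_halt:
  assumes "h < hi" "q \<in> Q" "tp h \<in> \<Gamma>" "\<delta> q (tp h) = None"
  shows "mw_step rules `` {config_word (state_sym q) tp h lo hi} =
    {config_word rewind_sym tp h lo hi, config_word fork_sym tp h lo hi}"
proof -
  have rules: "head_rules q (tp h) = {([], state_sym q, [tape_sym (tp h)], [rewind_sym, tape_sym (tp h)]),
      ([], state_sym q, [tape_sym (tp h)], [fork_sym, tape_sym (tp h)])}"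
    using assms(4) by (simp add: head_rules_def)
  have "mw_step rules `` {(left_end # tape_word tp lo h) @ state_sym q # tape_sym (tp h) #
      tape_word tp (h + 1) hi @ [right_end]} =
      (\<lambda>(_, _, _, t). (left_end # tape_word tp lo h) @ t @ tape_word tp (h + 1) hi @ [right_end]) `
        head_rules q (tp h)"
    by (rule successors_state_head_no_left_context) (use assms rules in auto)
  then show ?thesis
    using assms(1) by (simp add: config_word_head rules)
qed

lemma successors_config_rewind:
  assumes "lo \<le> h" "h < hi" "tp h = 0"
  shows "mw_step rules `` {config_word rewind_sym tp h lo hi} = {config_word rewind_sym tp (h + 1) lo hi}"
proof -
  have "config_word rewind_sym tp (h + 1) lo hi =
      (left_end # tape_word tp lo h) @ tape_sym 0 # rewind_sym # tape_word tp (h + 1) hi @ [right_end]"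
    using assms by (simp add: config_word_def tape_word_snoc[of lo "h + 1"])
  then show ?thesis
    using assms
      successors_rewind_sym_blank[of "left_end # tape_word tp lo h" "tape_word tp (h + 1) hi @ [right_end]"]
    by (simp add: config_word_head)
qed

lemma successors_config_restart:
  assumes "h < hi" "tp h = 1"
  shows "mw_step rules `` {config_word rewind_sym tp h lo hi} = {config_word (state_sym q0) tp h lo hi}"
  using assms
    successors_rewind_sym_one[of "left_end # tape_word tp lo h" "tape_word tp (h + 1) hi @ [right_end]"]
  by (simp add: config_word_head)

(* The run on input n placed at offset d: each restart happens where the previous output lies. *)
definition run :: "nat \<Rightarrow> int \<Rightarrow> nat \<Rightarrow> tm_config option" where
  "run n d j = tm_run \<delta> (q0, unary_tape d n, d) j"

lemma run_closed: "run n d j = Some (q, tp, h) \<Longrightarrow> q \<in> Q \<and> (\<forall>i. tp i \<in> \<Gamma>)"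
  unfolding run_def
  by (rule tm_run_closed[OF machine_valid start_in_states])
    (use blank_in_symbols one_in_symbols in \<open>auto simp: unary_tape_def\<close>)

lemma run_halts:
  assumes "1 \<le> n"
  shows "\<exists>q tp h p. run n d (T n) = Some (q, tp, h) \<and> tm_step \<delta> (q, tp, h) = None \<and>
    tp = unary_tape p (Suc n) \<and> h \<le> p"
proof -
  obtain q tp h p where H: "tm_run \<delta> (q0, unary_tape 0 n, 0) (T n) = Some (q, tp, h)"
    "tm_step \<delta> (q, tp, h) = None" "tp = unary_tape p (Suc n)" "h \<le> p"
    using halter assms unfolding is_halter_def by blast
  have "shift_config d (q0, unary_tape 0 n, 0) = (q0, unary_tape d n, d)"
    by (simp add: shift_config_def unary_tape_shift[of d n])
  then have "run n d (T n) = Some (shift_config d (q, tp, h))"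
    using tm_run_shift_config[of \<delta> d "(q0, unary_tape 0 n, 0)" "T n"] H(1) by (simp add: run_def)
  moreover have "shift_config d (q, tp, h) = (q, unary_tape (p + d) (Suc n), h + d)"
    using H(3) by (simp add: shift_config_def unary_tape_def fun_eq_iff)
  moreover have "tm_step \<delta> (shift_config d (q, tp, h)) = None"
    using H(2) by (simp add: tm_step_shift_config)
  ultimately show ?thesis using H(4) by fastforce
qed

lemma run_step:
  assumes "1 \<le> n" "j < T n" "run n d j = Some (q, tp, h)"
  shows "\<exists>q' b dir. \<delta> q (tp h) = Some (q', b, dir) \<and>
    run n d (Suc j) = Some (q', tp(h := b), if dir then h + 1 else h - 1)"
proof -
  have "run n d (Suc j) \<noteq> None"
    using run_halts[OF assms(1), of d] tm_run_defined_le[of \<delta> _ "T n" "Suc j"] assms(2)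
    unfolding run_def by fastforce
  then obtain c' where "tm_step \<delta> (q, tp, h) = Some c'" "run n d (Suc j) = Some c'"
    using assms(3) by (auto simp: run_def)
  then show ?thesis by (auto simp: tm_step_def split: option.splits) blast+
qed

lemma run_halted:
  assumes "1 \<le> n" "run n d (T n) = Some (q, tp, h)"
  shows "\<delta> q (tp h) = None \<and> (\<exists>p. tp = unary_tape p (Suc n) \<and> h \<le> p)"
  using run_halts[OF assms(1), of d] assms(2) by (auto simp: tm_step_def split: option.splits)

definition simulating :: "nat \<Rightarrow> nat \<Rightarrow> nat list \<Rightarrow> bool" where
  "simulating n j v \<longleftrightarrow> 1 \<le> n \<and> j \<le> T n \<and>
     (\<exists>d q tp h lo hi. run n d j = Some (q, tp, h) \<and> window tp lo h hi \<and>
        v = config_word (state_sym q) tp h lo hi)"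

definition rewinding :: "nat \<Rightarrow> nat list \<Rightarrow> bool" where
  "rewinding n v \<longleftrightarrow> 1 \<le> n \<and>
     (\<exists>p h lo hi. lo \<le> h \<and> h \<le> p \<and> p + int n + 1 \<le> hi \<and>
        v = config_word rewind_sym (unary_tape p (Suc n)) h lo hi)"

lemma simulation_step:
  assumes run: "run n d j = Some (q, tp, h)" and win: "window tp lo h hi"
    and "1 \<le> n" "j < T n"
  obtains (pad) lo' hi' where
      "mw_step rules `` {config_word (state_sym q) tp h lo hi} = {config_word (state_sym q) tp h lo' hi'}"
      "window tp lo' h hi'" "padding_debt lo' h hi' < padding_debt lo h hi"
  | (move) v' where "mw_step rules `` {config_word (state_sym q) tp h lo hi} = {v'}"
      "simulating n (Suc j) v'"
proof -
  have closed: "q \<in> Q" "\<And>i. tp i \<in> \<Gamma>" using run_closed[OF run] by auto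
  obtain q' b dir where tr: "\<delta> q (tp h) = Some (q', b, dir)"
    and run': "run n d (Suc j) = Some (q', tp(h := b), if dir then h + 1 else h - 1)"
    using run_step[OF assms(3,4) run] by blast
  have bounds: "lo \<le> h" "h \<le> hi" using win by (auto simp: window_def)
  show thesis
  proof (cases "h = hi")
    case True
    then have "tp h = 0" using window_nonblank[OF win, of h] by fastforce
    then show thesis
      using pad[of lo "hi + 1"] successors_config_pad_right[OF closed(1)] True window_extend_right[OF win]
      by (simp add: padding_debt_def)
  next
    case False
    then have "h < hi" using bounds by simp
    show thesis
    proof (cases dir)
      case True
      then show thesis
        using move successors_config_move_right[OF bounds(1) \<open>h < hi\<close>] tr run' assms(3,4)
          window_write_move[OF win \<open>h < hi\<close>, of "h + 1"] \<open>h < hi\<close> bounds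
        by (fastforce simp: simulating_def)
    next
      case False
      show thesis
      proof (cases "h = lo")
        case True
        then have "tp (h - 1) = 0" using window_nonblank[OF win, of "h - 1"] by fastforce
        then show thesis
          using pad[of "lo - 1" hi] successors_config_pad_left[OF \<open>h < hi\<close>] tr False True
            window_extend_left[OF win] \<open>h < hi\<close>
          by (simp add: padding_debt_def)
      next
        case lo_less: False
        then show thesis
          using move successors_config_move_left[OF _ \<open>h < hi\<close> _ closed(2)] tr run' False assms(3,4)
            window_write_move[OF win \<open>h < hi\<close>, of "h - 1"] \<open>h < hi\<close> bounds
          by (fastforce simp: simulating_def)
      qed
    qed
  qed
qed

lemma simulation_successor:
  assumes "simulating n j v" "j < T n"
  obtains v' where "mw_step rules `` {v} = {v'}" "simulating n j v' \<or> simulating n (Suc j) v'"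
proof -
  obtain d q tp h lo hi where r: "run n d j = Some (q, tp, h)" "window tp lo h hi"
    "v = config_word (state_sym q) tp h lo hi" "1 \<le> n" "j \<le> T n"
    using assms(1) unfolding simulating_def by blast
  show thesis
    using r(1,2,4) assms(2)
  proof (cases rule: simulation_step)
    case (pad lo' hi')
    then have "simulating n j (config_word (state_sym q) tp h lo' hi')"
      using r unfolding simulating_def by blast
    then show thesis using that pad(1) r(3) by blast
  qed (use that r(3) in blast)
qed

lemma simulation_advance:
  assumes "simulating n j v" "j < T n"
  shows "\<exists>v'. (v, v') \<in> (mw_step rules)\<^sup>* \<and> simulating n (Suc j) v'"
proof -
  obtain d q tp h lo hi where r: "run n d j = Some (q, tp, h)" "window tp lo h hi"
    "v = config_word (state_sym q) tp h lo hi" "1 \<le> n"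
    using assms(1) unfolding simulating_def by blast
  have "\<exists>v'. (config_word (state_sym q) tp h lo hi, v') \<in> (mw_step rules)\<^sup>* \<and> simulating n (Suc j) v'"
    if "window tp lo h hi" for lo hi
    using that
  proof (induction "padding_debt lo h hi" arbitrary: lo hi rule: less_induct)
    case less
    show ?case
      using r(1) less.prems r(4) assms(2)
    proof (cases rule: simulation_step)
      case (pad lo' hi')
      then obtain v' where "(config_word (state_sym q) tp h lo' hi', v') \<in> (mw_step rules)\<^sup>*"
        "simulating n (Suc j) v'"
        using less.hyps by blast
      moreover have
        "(config_word (state_sym q) tp h lo hi, config_word (state_sym q) tp h lo' hi') \<in> mw_step rules"
        using pad(1) by blast
      ultimately show ?thesis by (meson converse_rtrancl_into_rtrancl)
    next
      case (move v')
      then show ?thesis by blast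
    qed
  qed
  then show ?thesis using r by simp
qed

lemma simulation_halt:
  assumes "simulating n (T n) v"
  obtains v' x y where "mw_step rules `` {v} = {v', x @ fork_sym # y}" "rewinding n v'"
    "control_free x" "control_free y" "count_list (x @ y) (tape_sym 1) = Suc n"
proof -
  obtain d q tp h lo hi where r: "run n d (T n) = Some (q, tp, h)" "window tp lo h hi"
    "v = config_word (state_sym q) tp h lo hi" "1 \<le> n"
    using assms unfolding simulating_def by blast
  have closed: "q \<in> Q" "tp h \<in> \<Gamma>" using run_closed[OF r(1)] by auto
  obtain p where halted: "\<delta> q (tp h) = None" "tp = unary_tape p (Suc n)" "h \<le> p"
    using run_halted[OF r(4,1)] by blast
  have "tp p \<noteq> 0" "tp (p + int n) \<noteq> 0" using halted(2) by (auto simp: unary_tape_def)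
  then have output_in_window: "lo \<le> p" "p + int n < hi" using window_nonblank[OF r(2)] by blast+
  have "h < hi" "lo \<le> h" using output_in_window halted(3) r(2) by (auto simp: window_def)
  have "rewinding n (config_word rewind_sym tp h lo hi)"
    unfolding rewinding_def using r(4) \<open>lo \<le> h\<close> halted(2,3) output_in_window
    by (intro conjI exI[of _ p] exI[of _ h] exI[of _ lo] exI[of _ hi]) auto
  moreover have "count_list (tape_word tp lo h @ tape_word tp h hi) (tape_sym 1) = Suc n"
    using tape_word_append[of lo h hi tp, symmetric] \<open>h < hi\<close> \<open>lo \<le> h\<close> output_in_window halted(2)
      count_tape_word_unary[of lo p "Suc n" hi]
    by (simp del: count_list_append)
  ultimately show thesis
    using that[of "config_word rewind_sym tp h lo hi" "left_end # tape_word tp lo h"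
        "tape_word tp h hi @ [right_end]"]
      successors_config_halt[of h hi q tp lo, OF \<open>h < hi\<close> closed halted(1)] r(3)
    by (simp add: config_word_def)
qed

lemma successors_rewind_phase:
  assumes "lo \<le> h" "h \<le> p" "p + int n + 1 \<le> hi" "1 \<le> n"
  shows "mw_step rules `` {config_word rewind_sym (unary_tape p (Suc n)) h lo hi} =
    (if h < p then {config_word rewind_sym (unary_tape p (Suc n)) (h + 1) lo hi}
     else {config_word (state_sym q0) (unary_tape p (Suc n)) h lo hi})"
proof (cases "h < p")
  case True
  then have "unary_tape p (Suc n) h = 0" by (simp add: unary_tape_def)
  then show ?thesis using assms True successors_config_rewind[of lo h hi] by simp
next
  case False
  then have "unary_tape p (Suc n) h = 1" using assms(2) by (simp add: unary_tape_def)
  then show ?thesis using assms False successors_config_restart[of h hi] by simp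
qed

lemma simulation_start:
  assumes "lo \<le> p" "p + int n \<le> hi" "1 \<le> n"
  shows "simulating n 0 (config_word (state_sym q0) (unary_tape p n) p lo hi)"
  unfolding simulating_def window_def run_def using assms
  by (intro conjI exI[of _ p] exI[of _ q0] exI[of _ "unary_tape p n"] exI[of _ p] exI[of _ lo] exI[of _ hi])
    (auto simp: unary_tape_def)

lemma rewinding_successor:
  assumes "rewinding n v"
  obtains v' where "mw_step rules `` {v} = {v'}" "rewinding n v' \<or> simulating (Suc n) 0 v'"
proof -
  obtain p h lo hi where r: "lo \<le> h" "h \<le> p" "p + int n + 1 \<le> hi" "1 \<le> n"
    "v = config_word rewind_sym (unary_tape p (Suc n)) h lo hi"
    using assms unfolding rewinding_def by blast
  show thesis
  proof (cases "h < p")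
    case True
    then have "rewinding n (config_word rewind_sym (unary_tape p (Suc n)) (h + 1) lo hi)"
      unfolding rewinding_def using r
      by (intro conjI exI[of _ p] exI[of _ "h + 1"] exI[of _ lo] exI[of _ hi]) auto
    then show ?thesis using that successors_rewind_phase[OF r(1-4)] r(5) True by simp
  next
    case False
    then show ?thesis
      using that successors_rewind_phase[OF r(1-4)] r simulation_start[of lo p "Suc n" hi] by simp
  qed
qed

lemma rewinding_finish:
  assumes "rewinding n v"
  shows "\<exists>v'. (v, v') \<in> (mw_step rules)\<^sup>* \<and> simulating (Suc n) 0 v'"
proof -
  obtain p h lo hi where r: "lo \<le> h" "h \<le> p" "p + int n + 1 \<le> hi" "1 \<le> n"
    "v = config_word rewind_sym (unary_tape p (Suc n)) h lo hi"
    using assms unfolding rewinding_def by blast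
  have "\<exists>v'. (config_word rewind_sym (unary_tape p (Suc n)) h lo hi, v') \<in> (mw_step rules)\<^sup>* \<and>
      simulating (Suc n) 0 v'" if "lo \<le> h" "h \<le> p" for h
    using that
  proof (induction "nat (p - h)" arbitrary: h)
    case 0
    then have "h = p" by simp
    then show ?case
      using successors_rewind_phase[OF 0(2,3) r(3,4)] simulation_start[of lo p "Suc n" hi] 0(2) r(3,4) by auto
  next
    case (Suc k)
    then have "h < p" by simp
    then have "(config_word rewind_sym (unary_tape p (Suc n)) h lo hi,
        config_word rewind_sym (unary_tape p (Suc n)) (h + 1) lo hi) \<in> mw_step rules"
      using successors_rewind_phase[OF Suc.prems r(3,4)] by (auto intro: Image_singleton_eqD)
    moreover have "\<exists>v'. (config_word rewind_sym (unary_tape p (Suc n)) (h + 1) lo hi, v') \<in> (mw_step rules)\<^sup>* \<and>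
        simulating (Suc n) 0 v'"
      using Suc.hyps(1)[of "h + 1"] Suc.hyps(2) Suc.prems \<open>h < p\<close> by simp
    ultimately show ?case by (meson converse_rtrancl_into_rtrancl)
  qed
  then show ?thesis using r by simp
qed

definition init_word :: "nat list" where
  "init_word = config_word (state_sym q0) (unary_tape 0 1) 0 0 1"

lemma simulating_init_word: "simulating 1 0 init_word"
  unfolding init_word_def by (rule simulation_start) simp_all

(* c counts the completed runs of the machine. *)
definition main_line :: "nat \<Rightarrow> nat \<Rightarrow> nat list \<Rightarrow> bool" where
  "main_line k c v \<longleftrightarrow>
     (\<exists>n j. simulating n j v \<and> c = n - 1 \<and> (\<Sum>i=1..n-1. T i) + j \<le> k) \<or>
     (\<exists>n. rewinding n v \<and> c = n \<and> (\<Sum>i=1..n. T i) \<le> k)"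

lemma fork_word_successor:
  assumes "fork_word w"
  shows "\<exists>w'. mw_step rules `` {w} = {w'} \<and> fork_word w'"
proof -
  obtain x y where "control_free x" "control_free y" "w = x @ fork_sym # y"
    using assms unfolding fork_word_def by blast
  moreover have "fork_word (x @ fork_sym # tally_sym # y)"
    unfolding fork_word_def using \<open>control_free x\<close> \<open>control_free y\<close> by fastforce
  ultimately show ?thesis using successors_fork[of x y] by blast
qed

lemma main_line_simulatingI:
  "simulating n j v \<Longrightarrow> (\<Sum>i=1..n-1. T i) + j \<le> k \<Longrightarrow> main_line k (n - 1) v"
  unfolding main_line_def by blast

lemma main_line_rewindingI:
  "rewinding n v \<Longrightarrow> (\<Sum>i=1..n. T i) \<le> k \<Longrightarrow> main_line k n v"
  unfolding main_line_def by blast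

lemma main_line_successor:
  assumes "main_line k c v"
  shows "\<exists>v' c' B. main_line (Suc k) c' v' \<and> finite B \<and> card B + c \<le> c' \<and> (\<forall>w\<in>B. fork_word w) \<and>
    mw_step rules `` {v} \<subseteq> insert v' B"
proof -
  consider (running) n j where "simulating n j v" "j < T n" "c = n - 1" "(\<Sum>i=1..n-1. T i) + j \<le> k"
    | (halted) n where "simulating n (T n) v" "c = n - 1" "(\<Sum>i=1..n-1. T i) + T n \<le> k"
    | (rewinding) n where "rewinding n v" "c = n" "(\<Sum>i=1..n. T i) \<le> k"
    using assms unfolding main_line_def simulating_def by (metis le_neq_implies_less)
  then show ?thesis
  proof cases
    case (running n j)
    obtain v' where succ: "mw_step rules `` {v} = {v'}" "simulating n j v' \<or> simulating n (Suc j) v'"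
      using simulation_successor[OF running(1,2)] by blast
    have "main_line (Suc k) c v'"
      using succ(2) main_line_simulatingI[of n _ v' "Suc k"] running(3,4) by auto
    then show ?thesis using succ(1) by (intro exI[of _ v'] exI[of _ c] exI[of _ "{}"]) auto
  next
    case (halted n)
    obtain v' x y where succ: "mw_step rules `` {v} = {v', x @ fork_sym # y}" "rewinding n v'"
      "control_free x" "control_free y" "count_list (x @ y) (tape_sym 1) = Suc n"
      by (rule simulation_halt[OF halted(1)])
    have "1 \<le> n" using halted(1) unfolding simulating_def by simp
    then have "(\<Sum>i=1..n. T i) \<le> Suc k" using halted(3) by (cases n) simp_all
    then have "main_line (Suc k) n v'" using succ(2) by (rule main_line_rewindingI[rotated])
    moreover have "fork_word (x @ fork_sym # y)" unfolding fork_word_def using succ(3,4) by blast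
    ultimately show ?thesis using succ(1) halted(2) \<open>1 \<le> n\<close>
      by (intro exI[of _ v'] exI[of _ n] exI[of _ "{x @ fork_sym # y}"]) auto
  next
    case (rewinding n)
    obtain v' where succ: "mw_step rules `` {v} = {v'}" "rewinding n v' \<or> simulating (Suc n) 0 v'"
      using rewinding_successor[OF rewinding(1)] by blast
    have "main_line (Suc k) c v'"
      using succ(2) main_line_rewindingI[of n v' "Suc k"] main_line_simulatingI[of "Suc n" 0 v' "Suc k"]
        rewinding(2,3)
      by auto
    then show ?thesis using succ(1) by (intro exI[of _ v'] exI[of _ c] exI[of _ "{}"]) auto
  qed
qed

lemma fork_words_successors:
  assumes "finite B" "\<forall>w\<in>B. fork_word w"
  shows "finite (mw_step rules `` B) \<and> card (mw_step rules `` B) \<le> card B \<and>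
    (\<forall>w \<in> mw_step rules `` B. fork_word w)"
proof -
  have fork_step: "\<exists>w'. mw_step rules `` {w} = {w'} \<and> fork_word w'" if "w \<in> B" for w
    using fork_word_successor assms(2) that by simp
  have "fork_word w" if w: "w \<in> mw_step rules `` B" for w
  proof -
    obtain u where "u \<in> B" "w \<in> mw_step rules `` {u}" using w by blast
    moreover obtain w' where "mw_step rules `` {u} = {w'}" "fork_word w'"
      using fork_step[OF \<open>u \<in> B\<close>] by blast
    ultimately show ?thesis by simp
  qed
  moreover have "finite (mw_step rules `` B) \<and> card (mw_step rules `` B) \<le> card B"
    by (rule card_Image_le_if_functional[OF assms(1)]) (use fork_step in blast)
  ultimately show ?thesis by blast
qed

lemma reachable_in_main_line_or_fork:
  "\<exists>v c B. main_line k c v \<and> finite B \<and> card B \<le> c \<and> (\<forall>w\<in>B. fork_word w) \<and>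
     {w. (init_word, w) \<in> mw_step rules ^^ k} \<subseteq> insert v B"
proof (induction k)
  case 0
  have "main_line 0 0 init_word" using main_line_simulatingI[OF simulating_init_word] by simp
  then show ?case by (intro exI[of _ init_word] exI[of _ 0] exI[of _ "{}"]) auto
next
  case (Suc k)
  then obtain v c B where IH: "main_line k c v" "finite B" "card B \<le> c" "\<forall>w\<in>B. fork_word w"
    "{w. (init_word, w) \<in> mw_step rules ^^ k} \<subseteq> insert v B"
    by (elim exE conjE) (rule that)
  obtain v' c' B' where next_main: "main_line (Suc k) c' v'" "finite B'" "card B' + c \<le> c'"
    "\<forall>w\<in>B'. fork_word w" "mw_step rules `` {v} \<subseteq> insert v' B'"
    using main_line_successor[OF IH(1)] by (elim exE conjE) (rule that)
  define B'' where "B'' = B' \<union> mw_step rules `` B"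
  have forks: "finite (mw_step rules `` B)" "card (mw_step rules `` B) \<le> card B"
    "\<forall>w \<in> mw_step rules `` B. fork_word w"
    using fork_words_successors[OF IH(2,4)] by blast+
  have "card B'' \<le> c'"
    using card_Un_le[of B' "mw_step rules `` B"] forks IH(3) next_main(3) unfolding B''_def by linarith
  moreover have "w \<in> insert v' B''" if w: "(init_word, w) \<in> mw_step rules ^^ Suc k" for w
  proof -
    obtain u where "(init_word, u) \<in> mw_step rules ^^ k" "(u, w) \<in> mw_step rules"
      using w by (rule relpow_Suc_E)
    then have "u \<in> insert v B" "w \<in> mw_step rules `` {u}" using IH(5) by blast+
    then show ?thesis using next_main(5) unfolding B''_def by blast
  qed
  moreover have "finite B''" "\<forall>w \<in> B''. fork_word w"
    using next_main(2,4) forks unfolding B''_def by blast+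
  ultimately show ?case using next_main(1) by (intro exI[of _ v'] exI[of _ c'] exI[of _ B'']) blast
qed

lemma card_mw_layer_le:
  "\<exists>c. finite (mw_layer rules init_word k) \<and> card (mw_layer rules init_word k) \<le> Suc c \<and>
     (\<Sum>i=1..c. T i) \<le> k"
proof -
  obtain v c B where r: "main_line k c v" "finite B" "card B \<le> c" "\<forall>w\<in>B. fork_word w"
    "{w. (init_word, w) \<in> mw_step rules ^^ k} \<subseteq> insert v B"
    using reachable_in_main_line_or_fork[of k] by (elim exE conjE) (rule that)
  have sub: "mw_layer rules init_word k \<subseteq> insert v B" using r(5) unfolding mw_layer_def by blast
  then have "finite (mw_layer rules init_word k)" using r(2) by (simp add: finite_subset)
  moreover have "card (mw_layer rules init_word k) \<le> Suc c"
    using card_mono[OF _ sub] r(2,3) by (simp add: card_insert_if split: if_splits)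
  moreover have "(\<Sum>i=1..c. T i) \<le> k" using r(1) unfolding main_line_def by auto
  ultimately show ?thesis by blast
qed

lemma simulation_run:
  assumes "simulating n 0 v" "j \<le> T n"
  shows "\<exists>v'. (v, v') \<in> (mw_step rules)\<^sup>* \<and> simulating n j v'"
  using assms(2)
proof (induction j)
  case 0
  then show ?case using assms(1) by blast
next
  case (Suc j)
  then obtain v1 where "(v, v1) \<in> (mw_step rules)\<^sup>*" "simulating n j v1" by auto
  moreover obtain v2 where "(v1, v2) \<in> (mw_step rules)\<^sup>*" "simulating n (Suc j) v2"
    using simulation_advance[OF \<open>simulating n j v1\<close>] Suc.prems by auto
  ultimately show ?case by (meson rtrancl_trans)
qed

lemma reachable_simulating:
  "1 \<le> n \<Longrightarrow> \<exists>v. (init_word, v) \<in> (mw_step rules)\<^sup>* \<and> simulating n 0 v"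
proof (induction n rule: nat_induct_at_least)
  case base
  then show ?case using simulating_init_word by blast
next
  case (Suc n)
  then obtain v where v: "(init_word, v) \<in> (mw_step rules)\<^sup>*" "simulating n 0 v" by blast
  obtain v' where v': "(v, v') \<in> (mw_step rules)\<^sup>*" "simulating n (T n) v'"
    using simulation_run[OF v(2)] by blast
  obtain v1 x y where "mw_step rules `` {v'} = {v1, x @ fork_sym # y}" "rewinding n v1"
    "control_free x" "control_free y" "count_list (x @ y) (tape_sym 1) = Suc n"
    by (rule simulation_halt[OF v'(2)])
  moreover obtain v2 where "(v1, v2) \<in> (mw_step rules)\<^sup>*" "simulating (Suc n) 0 v2"
    using rewinding_finish[OF \<open>rewinding n v1\<close>] by blast
  moreover have "(v', v1) \<in> mw_step rules" using calculation(1) by (rule Image_singleton_eqD) simp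
  ultimately show ?case using v(1) v'(1) by (meson converse_rtrancl_into_rtrancl rtrancl_trans)
qed

lemma reachable_fork_word:
  assumes "1 \<le> n"
  shows "\<exists>x y. control_free x \<and> control_free y \<and> count_list (x @ y) (tape_sym 1) = Suc n \<and>
    (init_word, x @ fork_sym # y) \<in> (mw_step rules)\<^sup>*"
proof -
  obtain v where v: "(init_word, v) \<in> (mw_step rules)\<^sup>*" "simulating n 0 v"
    using reachable_simulating[OF assms] by blast
  obtain v' where v': "(v, v') \<in> (mw_step rules)\<^sup>*" "simulating n (T n) v'"
    using simulation_run[OF v(2)] by blast
  obtain v1 x y where xy: "mw_step rules `` {v'} = {v1, x @ fork_sym # y}" "rewinding n v1"
    "control_free x" "control_free y" "count_list (x @ y) (tape_sym 1) = Suc n"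
    by (rule simulation_halt[OF v'(2)])
  have "(v', x @ fork_sym # y) \<in> mw_step rules" using xy(1) by (rule Image_singleton_eqD) simp
  then show ?thesis
    using v(1) v'(1) xy(3-5) by (meson rtrancl.rtrancl_into_rtrancl rtrancl_trans)
qed

lemma count_tally_le_steps:
  assumes "(init_word, w) \<in> mw_step rules ^^ k"
  shows "count_list w tally_sym \<le> k"
proof -
  have "count_list t tally_sym \<le> 1" if "(r, t) \<in> rules" for r t
    using that finite_symbols
    by (auto simp: rules_def ctrl_rules_def head_rules_def split: option.splits if_splits)
  moreover have "count_list init_word tally_sym = 0"
    by (simp add: init_word_def config_word_def tape_word_Cons unary_tape_def)
  ultimately show ?thesis using count_list_relpow_mw_step_le[OF _ assms] by fastforce
qed

lemma fork_words_in_large_layers: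
  assumes "1 \<le> n"
  obtains K f
  where "\<And>k. K \<le> k \<Longrightarrow> f k \<in> mw_layer rules init_word k \<and> count_list (f k) (tape_sym 1) = Suc n"
proof -
  obtain x y where xy: "control_free x" "control_free y" "count_list (x @ y) (tape_sym 1) = Suc n"
    "(init_word, x @ fork_sym # y) \<in> (mw_step rules)\<^sup>*"
    using reachable_fork_word[OF assms] by blast
  define fw where "fw m = x @ fork_sym # replicate m tally_sym @ y" for m
  define dist where "dist m = mw_dist rules init_word (fw m)" for m
  have step: "(fw m, fw (Suc m)) \<in> mw_step rules" for m
  proof -
    have "mw_step rules `` {fw m} = {fw (Suc m)}"
      using successors_fork[of x "replicate m tally_sym @ y"] xy(1,2) by (simp add: fw_def)
    then show ?thesis by (rule Image_singleton_eqD) simp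
  qed
  have reach: "(init_word, fw m) \<in> (mw_step rules)\<^sup>*" for m
  proof (induction m)
    case 0
    then show ?case using xy(4) by (simp add: fw_def)
  next
    case (Suc m)
    then show ?case using step by (meson rtrancl.rtrancl_into_rtrancl)
  qed
  have layer: "fw m \<in> mw_layer rules init_word (dist m)" for m
    unfolding dist_def by (rule in_mw_layer_mw_dist[OF reach])
  have dist_ge: "m \<le> dist m" for m
  proof -
    have "count_list (fw m) tally_sym \<le> dist m"
      using layer[of m] count_tally_le_steps unfolding mw_layer_def by blast
    then show ?thesis by (simp add: fw_def count_list_replicate)
  qed
  have dist_Suc: "dist (Suc m) \<le> Suc (dist m)" for m
  proof -
    have "(init_word, fw (Suc m)) \<in> mw_step rules ^^ Suc (dist m)"
      using layer[of m] step[of m] unfolding mw_layer_def by auto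
    then show ?thesis unfolding dist_def by (rule mw_dist_le)
  qed
  \<comment> \<open>The distance is at least the tally count m and grows by at most one per tally, so the
    delay dist m - m is antitone and hence eventually constant.\<close>
  define delay where "delay m = dist m - m" for m
  have "delay (Suc m) \<le> delay m" for m
    using dist_Suc[of m] dist_ge[of m] dist_ge[of "Suc m"] unfolding delay_def by linarith
  then obtain M where delay_const: "\<And>m. M \<le> m \<Longrightarrow> delay m = delay M"
    by (rule antimono_nat_eventually_const[of delay]) blast+
  show thesis
  proof (rule that[of "M + delay M" "\<lambda>k. fw (k - delay M)"])
    fix k assume k: "M + delay M \<le> k"
    then have "dist (k - delay M) = k"
      using delay_const[of "k - delay M"] dist_ge[of "k - delay M"] unfolding delay_def by linarith
    then show "fw (k - delay M) \<in> mw_layer rules init_word k \<and>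
        count_list (fw (k - delay M)) (tape_sym 1) = Suc n"
      using layer[of "k - delay M"] xy(3) by (simp add: fw_def count_list_replicate)
  qed
qed

lemma mw_layer_nonempty: "mw_layer rules init_word k \<noteq> {}"
proof -
  obtain K f
    where K: "\<And>k. K \<le> k \<Longrightarrow> f k \<in> mw_layer rules init_word k \<and> count_list (f k) (tape_sym 1) = Suc 1"
    by (rule fork_words_in_large_layers[of 1]) blast+
  have "f (max k K) \<in> mw_layer rules init_word (max k K)" using K by simp
  then have "mw_layer rules init_word (max k K) \<noteq> {}" by blast
  then show ?thesis by (rule mw_layer_nonempty_le) simp
qed

lemma card_mw_layer_unbounded: "\<exists>k. N \<le> card (mw_layer rules init_word k)"
proof -
  have "\<exists>K f. \<forall>k\<ge>K. f k \<in> mw_layer rules init_word k \<and> count_list (f k) (tape_sym 1) = Suc n"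
    if "n \<in> {1..N}" for n
    using fork_words_in_large_layers[of n] that by (metis atLeastAtMost_iff)
  then obtain K f where Kf: "\<And>n k. n \<in> {1..N} \<Longrightarrow> K n \<le> k \<Longrightarrow>
      f n k \<in> mw_layer rules init_word k \<and> count_list (f n k) (tape_sym 1) = Suc n"
    by metis
  define k where "k = Max (K ` {1..N})"
  have K_le: "K n \<le> k" if "n \<in> {1..N}" for n
    unfolding k_def using that by (intro Max_ge) auto
  have "inj_on (\<lambda>n. f n k) {1..N}"
  proof (rule inj_onI)
    fix a b assume "a \<in> {1..N}" "b \<in> {1..N}" "f a k = f b k"
    then show "a = b" using Kf[of a k] Kf[of b k] K_le by fastforce
  qed
  then have "N = card ((\<lambda>n. f n k) ` {1..N})" by (simp add: card_image)
  also have "\<dots> \<le> card (mw_layer rules init_word k)"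
    using Kf K_le card_mw_layer_le[of k] by (intro card_mono) auto
  finally show ?thesis by blast
qed

lemma mw_unbounded_rules: "mw_unbounded rules init_word"
  using card_mw_layer_le mw_layer_nonempty card_mw_layer_unbounded by (intro mw_unboundedI) auto

lemma mw_growth_le_Tstar_inv:
  assumes "\<forall>n\<ge>1. T n \<ge> 1"
  shows "real (mw_growth rules init_word n) \<le> 1 + Tstar_inv T (real (n - 1))"
proof -
  obtain c where c: "card (mw_layer rules init_word (n - 1)) \<le> Suc c" "(\<Sum>i=1..c. T i) \<le> n - 1"
    using card_mw_layer_le by blast
  then have "real (\<Sum>i=1..c. T i) \<le> real (n - 1)" by (simp only: of_nat_le_iff)
  then have "real c \<le> Tstar_inv T (real (n - 1))" by (rule Tstar_inv_ge[OF assms])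
  then show ?thesis using c(1) by (simp add: mw_growth_def)
qed

end

theorem theorem1:
  fixes T :: "nat \<Rightarrow> nat"
  assumes "\<forall>n\<ge>1. T n \<ge> 1"
    and "(\<lambda>n. real (T n)) \<in> \<Omega>(\<lambda>n. real n)"
    and "\<exists>Q \<Gamma> \<delta> q0. is_halter T Q \<Gamma> \<delta> q0"
  shows "\<exists>R s \<Sigma>. mw_valid R s \<Sigma> \<and> mw_unbounded R s \<and>
           (\<exists>a b. tight_bounds (mw_growth R s) a b \<and>
                  a \<in> O(Tstar_inv T) \<and> b \<in> O(Tstar_inv T))"
proof -
  obtain Q \<Gamma> \<delta> q0 where "is_halter T Q \<Gamma> \<delta> q0" using assms(3) by blast
  then interpret halter_sim T Q \<Gamma> \<delta> q0 by unfold_locales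
  define g where "g = mw_growth rules init_word"
  have g_le: "real (g k) \<le> 1 + Tstar_inv T (real (n - 1))" if "k \<le> n" for k n
    using mw_growth_le_Tstar_inv[OF assms(1), of k]
      Tstar_inv_mono[OF assms(1), of "real (k - 1)" "real (n - 1)"]
      that diff_le_mono[OF that, of 1] unfolding g_def by simp
  have "1 \<le> 1 + Tstar_inv T (real (n - 1))" for n using Tstar_Tstar_inv[OF assms(1)] by simp
  then have envelopes: "real (upper_env g n) \<le> 1 + Tstar_inv T (real (n - 1))"
      "real (lower_env g n) \<le> 1 + Tstar_inv T (real (n - 1))" if "1 \<le> n" for n
    using upper_env_le[OF that] lower_env_le g_le by blast+
  have "tight_bounds g (Lchain pos_nat (upper_env g)) (Lchain pos_nat (lower_env g))"
    unfolding tight_bounds_def using continuous_on_Lchain_pos_nat Lchain_pos_nat_nonneg by auto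
  moreover have "Lchain pos_nat (upper_env g) \<in> O(Tstar_inv T)"
    "Lchain pos_nat (lower_env g) \<in> O(Tstar_inv T)"
    using envelopes by (auto intro: Lchain_pos_nat_bigo_Tstar_inv[OF assms(1)])
  ultimately show ?thesis
    using mw_valid_rule_symbols[OF finite_rules] mw_unbounded_rules unfolding g_def by blast
qed

end
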